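(* Let $n\ge 3$ be a multiple of $3$ and let $A\subseteq\mathbb{F}_3^n$ be such that the equation $a+b+c=0$ with $a,b,c\in A$ has no solutions except $a=b=c$. Then $$|A|\le 3\sum_{i=0}^{2n/3}\binom{n}{i}_2-\binom{n}{2n/3}_2 .$$
   Context: $\mathbb{F}_3$ is the field of integers modulo $3$. The trinomial coefficient $\binom{n}{k}_2$ is the coefficient of $x^k$ in $(1+x+x^2)^n$. *)

theory Defs
  imports "HOL-Analysis.Analysis" "HOL-Library.Numeral_Type" "HOL-Computational_Algebra.Polynomial"
begin

definition trinomial :: "nat \<Rightarrow> nat \<Rightarrow> nat" where
  "trinomial n k = coeff ([:1, 1, 1:] ^ n) k"

end

theory Submission
  imports Defs
begin

text \<open>Polynomial method in slice-rank form, with dimensions of \<open>\<bbbF>\<^sub>3\<close>-spaces measured by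
  cardinalities. Let \<open>E\<^sub>d\<close> be the reduced exponent vectors (entries \<open>\<le> 2\<close>) of degree \<open>\<le> d\<close>, so
  that \<open>|E\<^sub>d|\<close> is a sum of trinomial coefficients. The reduced polynomials of degree \<open>\<le> 2k\<close>
  vanishing off \<open>A\<close> form a space \<open>V\<close> of dimension at least \<open>|E\<^sub>2\<^sub>k| - (3\<^sup>n - |A|)\<close>, and \<open>V\<close>
  contains some \<open>P\<close> equal to \<open>1\<close> on a set \<open>I\<close> of \<open>dim V\<close> points, necessarily in \<open>A\<close>.
  Since \<open>A\<close> is cap-free, the matrix \<open>P(-a-b)\<close> over \<open>a, b \<in> I\<close> is the identity, while splitting each
  monomial of \<open>P(x + y)\<close> into a part of degree \<open>\<le> k\<close> in \<open>x\<close> or in \<open>y\<close> bounds its rank by \<open>2|E\<^sub>k|\<close>.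
  Hence \<open>|E\<^sub>2\<^sub>k| + |A| \<le> 3\<^sup>n + 2|E\<^sub>k|\<close>, and for \<open>k = 2n/3\<close> the symmetry \<open>e \<mapsto> 2 - e\<close> of exponent
  vectors gives \<open>|E\<^sub>2\<^sub>k| + |E\<^sub>k| = 3\<^sup>n + T(n,k)\<close>.\<close>

section \<open>Linear spaces of functions over a finite ring\<close>

definition lin_closed :: "('x \<Rightarrow> 'a::comm_ring_1) set \<Rightarrow> bool" where
  "lin_closed V \<longleftrightarrow> (\<forall>f\<in>V. \<forall>g\<in>V. \<forall>k. (\<lambda>x. f x + k * g x) \<in> V)"

lemma lin_closedD: "lin_closed V \<Longrightarrow> f \<in> V \<Longrightarrow> g \<in> V \<Longrightarrow> (\<lambda>x. f x + k * g x) \<in> V"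
  unfolding lin_closed_def by blast

lemma lin_closed_diff:
  assumes "lin_closed V" "f \<in> V" "g \<in> V"
  shows "(\<lambda>x. f x - g x) \<in> V"
  using lin_closedD[OF assms, of "-1"] by simp

lemma lin_closed_zero:
  assumes "lin_closed V" "V \<noteq> {}"
  shows "(\<lambda>_. 0) \<in> V"
  using assms lin_closed_diff[OF assms(1)] by fastforce

lemma lin_closed_sum:
  assumes "lin_closed V" "V \<noteq> {}" "finite T" "\<And>a. a \<in> T \<Longrightarrow> g a \<in> V"
  shows "(\<lambda>x. \<Sum>a\<in>T. c a * g a x) \<in> V"
  using assms(3,4)
proof (induction T rule: finite_induct)
  case empty
  then show ?case using lin_closed_zero[OF assms(1,2)] by simp
next
  case (insert a T)
  then have "(\<lambda>x. (\<Sum>b\<in>T. c b * g b x) + c a * g a x) \<in> V"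
    by (intro lin_closedD[OF assms(1)]) auto
  with insert show ?case by (simp add: add.commute)
qed

lemma lin_closed_vanishing:
  "lin_closed V \<Longrightarrow> lin_closed {f \<in> V. \<forall>x\<in>B. f x = 0}"
  unfolding lin_closed_def by auto

lemma card_le_card_restrict_mult_card_vanishing:
  fixes V :: "('x::finite \<Rightarrow> 'a::{comm_ring_1,finite}) set"
  assumes "lin_closed V"
  shows "card V \<le> CARD('a) ^ card B * card {f \<in> V. \<forall>x\<in>B. f x = 0}"
proof -
  let ?K = "{f \<in> V. \<forall>x\<in>B. f x = 0}"
  define r where "r f = restrict f B" for f :: "'x \<Rightarrow> 'a"
  define s where "s y = (SOME f. f \<in> V \<and> r f = y)" for y
  define \<phi> where "\<phi> f = (r f, \<lambda>x. f x - s (r f) x)" for f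
  have s: "s (r f) \<in> V \<and> r (s (r f)) = r f" if "f \<in> V" for f
    unfolding s_def by (rule someI[of _ f]) (use that in auto)
  have "inj_on \<phi> V"
  proof (rule inj_onI)
    fix f g assume "\<phi> f = \<phi> g"
    moreover from this have "r f = r g" by (simp add: \<phi>_def)
    ultimately have "\<forall>x. f x - s (r g) x = g x - s (r g) x"
      by (simp add: \<phi>_def fun_eq_iff)
    then show "f = g" by (simp add: fun_eq_iff)
  qed
  moreover have "\<phi> ` V \<subseteq> (B \<rightarrow>\<^sub>E UNIV) \<times> ?K"
  proof (rule image_subsetI)
    fix f assume f: "f \<in> V"
    have "(\<lambda>x. f x - s (r f) x) \<in> V" using lin_closed_diff[OF assms f] s[OF f] by blast
    moreover have "f x = s (r f) x" if "x \<in> B" for x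
      using fun_cong[OF conjunct2[OF s[OF f]], of x] that by (simp add: r_def)
    ultimately show "\<phi> f \<in> (B \<rightarrow>\<^sub>E UNIV) \<times> ?K" by (simp add: \<phi>_def r_def)
  qed
  moreover have "finite ((B \<rightarrow>\<^sub>E (UNIV :: 'a set)) \<times> ?K)"
    by (simp add: finite_PiE)
  ultimately have "card V \<le> card ((B \<rightarrow>\<^sub>E (UNIV :: 'a set)) \<times> ?K)"
    by (rule card_inj_on_le)
  also have "\<dots> = CARD('a) ^ card B * card ?K"
    by (simp add: card_cartesian_product card_PiE)
  finally show ?thesis .
qed

definition interpolates :: "('x \<Rightarrow> 'a) set \<Rightarrow> 'x set \<Rightarrow> bool" where
  "interpolates V I \<longleftrightarrow> (\<forall>t. \<exists>f\<in>V. \<forall>i\<in>I. f i = t i)"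

lemma interpolates_insert:
  fixes V :: "('x \<Rightarrow> 'a::comm_ring_1) set"
  assumes "lin_closed V" and units: "\<And>z::'a. z \<noteq> 0 \<Longrightarrow> \<exists>w. w * z = 1"
    and "interpolates V I" "f \<in> V" "g \<in> V" "\<forall>i\<in>I. f i = g i" "f b \<noteq> g b"
  shows "interpolates V (insert b I)"
  unfolding interpolates_def
proof
  fix t
  define v where "v x = f x - g x" for x
  have "v \<in> V" unfolding v_def by (rule lin_closed_diff) fact+
  obtain w where w: "w * v b = 1" using units[of "v b"] assms(7) by (auto simp: v_def)
  obtain h where h: "h \<in> V" "\<forall>i\<in>I. h i = t i" using \<open>interpolates V I\<close> by (auto simp: interpolates_def)
  let ?k = "(t b - h b) * w"
  have "(\<lambda>x. h x + ?k * v x) \<in> V" by (rule lin_closedD) fact+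
  moreover have "h b + ?k * v b = t b"
    using w by (simp add: mult.assoc)
  moreover have "h i + ?k * v i = t i" if "i \<in> I" for i
    using h(2) assms(6) that by (simp add: v_def)
  ultimately show "\<exists>f\<in>V. \<forall>i\<in>insert b I. f i = t i" by auto
qed

text \<open>Restriction to a maximal interpolating set is injective on \<open>V\<close>. Nonzero elements are assumed
  invertible instead of assuming a field because the numeral type \<open>3\<close> is not an instance of \<open>field\<close>.\<close>
lemma ex_fun_eq_one_on_large_set:
  fixes V :: "('x::finite \<Rightarrow> 'a::{comm_ring_1,finite}) set"
  assumes "lin_closed V" "V \<noteq> {}" and units: "\<And>z::'a. z \<noteq> 0 \<Longrightarrow> \<exists>w. w * z = 1"
  shows "\<exists>P\<in>V. \<exists>I. (\<forall>i\<in>I. P i = 1) \<and> card V \<le> CARD('a) ^ card I"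
proof -
  have "interpolates V {}" using assms(2) by (auto simp: interpolates_def)
  moreover have "\<forall>J. interpolates V J \<longrightarrow> card J < Suc CARD('x)"
    by (simp add: less_Suc_eq_le card_mono)
  ultimately obtain I where I: "interpolates V I" and max: "\<And>J. interpolates V J \<Longrightarrow> card J \<le> card I"
    using Lattices_Big.ex_has_greatest_nat[of "interpolates V" "{}" card] by blast
  have "inj_on (\<lambda>f. restrict f I) V"
  proof (rule inj_onI, rule ext, rule ccontr)
    fix f g b assume "f \<in> V" "g \<in> V" "restrict f I = restrict g I" "f b \<noteq> g b"
    moreover from this have "\<forall>i\<in>I. f i = g i" by (metis restrict_apply')
    ultimately have "interpolates V (insert b I)"
      using interpolates_insert[OF assms(1) units I] by blast
    then have "card (insert b I) \<le> card I" by (rule max)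
    then have "b \<in> I" by (cases "b \<in> I") auto
    with \<open>restrict f I = restrict g I\<close> \<open>f b \<noteq> g b\<close> show False by (metis restrict_apply')
  qed
  moreover have "(\<lambda>f. restrict f I) ` V \<subseteq> I \<rightarrow>\<^sub>E UNIV" by auto
  ultimately have "card V \<le> card (I \<rightarrow>\<^sub>E (UNIV :: 'a set))"
    by (intro card_inj_on_le) (simp_all add: finite_PiE)
  also have "\<dots> = CARD('a) ^ card I" by (simp add: card_PiE)
  finally have "card V \<le> CARD('a) ^ card I" .
  moreover obtain P where "P \<in> V" "\<forall>i\<in>I. P i = 1"
    using spec[OF I[unfolded interpolates_def], of "\<lambda>_. 1"] by blast
  ultimately show ?thesis by blast
qed

lemma card_le_tensor_rank:
  fixes M :: "'a \<Rightarrow> 'a \<Rightarrow> 'k::{comm_semiring_1,finite}"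
  assumes "finite I" "finite J"
    and diag: "\<And>a b. a \<in> I \<Longrightarrow> b \<in> I \<Longrightarrow> M a b = (if a = b then 1 else 0)"
    and decomp: "\<And>a b. a \<in> I \<Longrightarrow> b \<in> I \<Longrightarrow> M a b = (\<Sum>j\<in>J. u j a * v j b)"
  shows "card I \<le> card J"
proof -
  define coords where "coords c = (\<lambda>j\<in>J. \<Sum>a\<in>I. c a * u j a)" for c :: "'a \<Rightarrow> 'k"
  have recover: "c b = (\<Sum>j\<in>J. coords c j * v j b)" if "b \<in> I" for c b
  proof -
    have "c b = (\<Sum>a\<in>I. if a = b then c a else 0)"
      using that \<open>finite I\<close> by simp
    also have "\<dots> = (\<Sum>a\<in>I. c a * M a b)"
      using that by (intro sum.cong) (simp_all add: diag)
    also have "\<dots> = (\<Sum>a\<in>I. \<Sum>j\<in>J. c a * u j a * v j b)"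
      using that by (simp add: decomp sum_distrib_left mult.assoc)
    also have "\<dots> = (\<Sum>j\<in>J. coords c j * v j b)"
      by (subst sum.swap) (simp add: coords_def sum_distrib_right)
    finally show ?thesis .
  qed
  have "inj_on coords (I \<rightarrow>\<^sub>E UNIV)"
  proof (rule inj_onI)
    fix c c' assume c: "c \<in> I \<rightarrow>\<^sub>E UNIV" and c': "c' \<in> I \<rightarrow>\<^sub>E UNIV" and "coords c = coords c'"
    then have "c b = c' b" if "b \<in> I" for b
      using recover[OF that, of c] recover[OF that, of c'] by simp
    then show "c = c'" by (rule PiE_ext[OF c c'])
  qed
  moreover have "coords ` (I \<rightarrow>\<^sub>E UNIV) \<subseteq> J \<rightarrow>\<^sub>E UNIV" by (auto simp: coords_def)
  ultimately have "card (I \<rightarrow>\<^sub>E (UNIV :: 'k set)) \<le> card (J \<rightarrow>\<^sub>E (UNIV :: 'k set))"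
    by (intro card_inj_on_le) (simp_all add: finite_PiE \<open>finite J\<close>)
  then have "CARD('k) ^ card I \<le> CARD('k) ^ card J"
    using assms(1,2) by (simp add: card_PiE)
  moreover have "1 < CARD('k)"
  proof -
    have "card {0, 1 :: 'k} \<le> CARD('k)" by (rule card_mono) simp_all
    then show ?thesis by simp
  qed
  ultimately show ?thesis by (rule power_le_imp_le_exp[rotated])
qed

lemma sum_regroup_two_slices:
  fixes w :: "'q \<Rightarrow> 'r::comm_semiring_1"
  assumes "finite Q" "finite K" and covered: "\<And>q. q \<in> Q \<Longrightarrow> l q \<in> K \<or> r q \<in> K"
  shows "\<exists>u v. \<forall>x y. (\<Sum>q\<in>Q. w q * s (l q) x * t (r q) y) = (\<Sum>j\<in>K <+> K. u j x * v j y)"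
proof -
  define QL where "QL = {q\<in>Q. l q \<in> K}"
  define QR where "QR = Q - QL"
  define u where "u j x = (case j of Inl \<kappa> \<Rightarrow> s \<kappa> x
    | Inr \<kappa> \<Rightarrow> \<Sum>q\<in>{q\<in>QR. r q = \<kappa>}. w q * s (l q) x)" for j x
  define v where "v j y = (case j of Inl \<kappa> \<Rightarrow> \<Sum>q\<in>{q\<in>QL. l q = \<kappa>}. w q * t (r q) y
    | Inr \<kappa> \<Rightarrow> t \<kappa> y)" for j y
  have fin: "finite QL" "finite QR" using \<open>finite Q\<close> by (simp_all add: QL_def QR_def)
  have "(\<Sum>q\<in>Q. w q * s (l q) x * t (r q) y) = (\<Sum>j\<in>K <+> K. u j x * v j y)" for x y
  proof -
    have "(\<Sum>q\<in>QL. w q * s (l q) x * t (r q) y)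
        = (\<Sum>\<kappa>\<in>K. \<Sum>q\<in>{q\<in>QL. l q = \<kappa>}. w q * s (l q) x * t (r q) y)"
      by (rule sum.group[symmetric]) (use fin \<open>finite K\<close> in \<open>auto simp: QL_def\<close>)
    also have "\<dots> = (\<Sum>\<kappa>\<in>K. u (Inl \<kappa>) x * v (Inl \<kappa>) y)"
      by (auto simp: u_def v_def sum_distrib_left mult_ac intro!: sum.cong)
    finally have left: "(\<Sum>q\<in>QL. w q * s (l q) x * t (r q) y) = (\<Sum>\<kappa>\<in>K. u (Inl \<kappa>) x * v (Inl \<kappa>) y)" .
    have "(\<Sum>q\<in>QR. w q * s (l q) x * t (r q) y)
        = (\<Sum>\<kappa>\<in>K. \<Sum>q\<in>{q\<in>QR. r q = \<kappa>}. w q * s (l q) x * t (r q) y)"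
      by (rule sum.group[symmetric]) (use fin \<open>finite K\<close> covered in \<open>auto simp: QL_def QR_def\<close>)
    also have "\<dots> = (\<Sum>\<kappa>\<in>K. u (Inr \<kappa>) x * v (Inr \<kappa>) y)"
      by (auto simp: u_def v_def sum_distrib_right intro!: sum.cong)
    finally have right: "(\<Sum>q\<in>QR. w q * s (l q) x * t (r q) y) = (\<Sum>\<kappa>\<in>K. u (Inr \<kappa>) x * v (Inr \<kappa>) y)" .
    have "(\<Sum>q\<in>Q. w q * s (l q) x * t (r q) y)
        = (\<Sum>q\<in>QL. w q * s (l q) x * t (r q) y) + (\<Sum>q\<in>QR. w q * s (l q) x * t (r q) y)"
      unfolding QR_def using \<open>finite Q\<close> by (subst sum.subset_diff[of QL Q]) (auto simp: QL_def add.commute)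
    then show ?thesis
      using left right \<open>finite K\<close> by (simp add: sum.Plus comp_def)
  qed
  then show ?thesis by blast
qed

section \<open>Reduced exponent vectors\<close>

definition reduced_exps :: "('n::finite \<Rightarrow> nat) set" where
  "reduced_exps = {e. \<forall>i. e i \<le> 2}"

definition exps_upto :: "nat \<Rightarrow> ('n::finite \<Rightarrow> nat) set" where
  "exps_upto d = {e \<in> reduced_exps. sum e UNIV \<le> d}"

lemma reduced_exps_eq_PiE: "reduced_exps = UNIV \<rightarrow>\<^sub>E {..2}"
  by (auto simp: reduced_exps_def PiE_UNIV_domain)

lemma finite_reduced_exps [simp]: "finite (reduced_exps :: ('n::finite \<Rightarrow> nat) set)"
  by (simp add: reduced_exps_eq_PiE finite_PiE)

lemma finite_exps_upto [simp]: "finite (exps_upto d)"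
  by (simp add: exps_upto_def)

lemma card_reduced_exps: "card (reduced_exps :: ('n::finite \<Rightarrow> nat) set) = 3 ^ CARD('n)"
  by (simp add: reduced_exps_eq_PiE card_PiE)

lemma prod_monom_one: "finite J \<Longrightarrow> (\<Prod>i\<in>J. monom (1::'a::comm_semiring_1) (g i)) = monom 1 (sum g J)"
  by (induction J rule: finite_induct) (simp_all add: mult_monom)

lemma card_reduced_exps_degree:
  "card {e \<in> (reduced_exps :: ('n::finite \<Rightarrow> nat) set). sum e UNIV = j} = trinomial CARD('n) j"
proof -
  have "[:1, 1, 1:] = (\<Sum>t\<le>2. monom (1::nat) t)"
    by (simp add: numeral_2_eq_2 poly_eq_iff coeff_pCons split: nat.splits)
  then have "[:1, 1, 1:] ^ CARD('n) = (\<Prod>i\<in>(UNIV :: 'n set). \<Sum>t\<le>2. monom (1::nat) t)"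
    by simp
  also have "\<dots> = (\<Sum>e\<in>(reduced_exps :: ('n \<Rightarrow> nat) set). \<Prod>i\<in>UNIV. monom 1 (e i))"
    unfolding reduced_exps_eq_PiE by (rule prod_sum_PiE) auto
  also have "\<dots> = (\<Sum>e\<in>(reduced_exps :: ('n \<Rightarrow> nat) set). monom 1 (sum e UNIV))"
    by (intro sum.cong refl prod_monom_one) simp
  finally have "trinomial CARD('n) j = (\<Sum>e\<in>(reduced_exps :: ('n \<Rightarrow> nat) set). if sum e UNIV = j then 1 else 0)"
    by (simp add: trinomial_def coeff_sum del: One_nat_def)
  then show ?thesis by (simp add: sum.If_cases Int_def)
qed

lemma card_reduced_exps_degree_in:
  assumes "finite J"
  shows "card {e \<in> (reduced_exps :: ('n::finite \<Rightarrow> nat) set). sum e UNIV \<in> J}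
    = (\<Sum>j\<in>J. trinomial CARD('n) j)"
proof -
  have "{e \<in> (reduced_exps :: ('n \<Rightarrow> nat) set). sum e UNIV \<in> J}
      = (\<Union>j\<in>J. {e \<in> reduced_exps. sum e UNIV = j})"
    by auto
  also have "card \<dots> = (\<Sum>j\<in>J. card {e \<in> (reduced_exps :: ('n \<Rightarrow> nat) set). sum e UNIV = j})"
    by (rule card_UN_disjoint) (use assms in auto)
  finally show ?thesis by (simp add: card_reduced_exps_degree)
qed

lemma card_exps_upto: "card (exps_upto d :: ('n::finite \<Rightarrow> nat) set) = (\<Sum>j\<le>d. trinomial CARD('n) j)"
  using card_reduced_exps_degree_in[of "{..d}"] by (simp add: exps_upto_def)

lemma card_reduced_exps_degree_gt:
  assumes "d \<le> 2 * CARD('n)"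
  shows "card {e \<in> (reduced_exps :: ('n::finite \<Rightarrow> nat) set). d < sum e UNIV}
    = card {e \<in> (reduced_exps :: ('n \<Rightarrow> nat) set). sum e UNIV < 2 * CARD('n) - d}"
proof -
  define flip where "flip e = (\<lambda>i. 2 - e i)" for e :: "'n \<Rightarrow> nat"
  have deg_le: "sum e UNIV \<le> 2 * CARD('n)" if "e \<in> reduced_exps" for e :: "'n \<Rightarrow> nat"
    using sum_mono[of "UNIV :: 'n set" e "\<lambda>_. 2"] that by (simp add: reduced_exps_def mult.commute)
  have flip_reduced: "flip e \<in> reduced_exps" for e by (simp add: flip_def reduced_exps_def)
  have flip_flip: "flip (flip e) = e" if "e \<in> reduced_exps" for e
    using that by (auto simp: flip_def reduced_exps_def)
  have deg_flip: "sum (flip e) UNIV = 2 * CARD('n) - sum e UNIV" if "e \<in> reduced_exps" for e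
  proof -
    have "sum (flip e) UNIV + sum e UNIV = (\<Sum>i\<in>(UNIV :: 'n set). 2)"
      using that by (simp add: flip_def reduced_exps_def sum.distrib[symmetric])
    then show ?thesis by simp
  qed
  have "flip e \<in> {e \<in> reduced_exps. sum e UNIV < 2 * CARD('n) - d}"
    if "e \<in> reduced_exps" "d < sum e UNIV" for e
    using that deg_le[OF that(1)] by (simp add: flip_reduced deg_flip)
  moreover have "flip e \<in> {e \<in> reduced_exps. d < sum e UNIV}"
    if "e \<in> reduced_exps" "sum e UNIV < 2 * CARD('n) - d" for e
    using that assms by (simp add: flip_reduced deg_flip)
  ultimately show ?thesis
    by (intro bij_betw_same_card[of flip] bij_betw_byWitness[of _ flip]) (auto simp: flip_flip)
qed

text \<open>With \<open>3k = 2n\<close>, degrees above \<open>2k\<close> are mirror images of degrees below \<open>k\<close>.\<close>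
lemma card_exps_upto_double_plus:
  assumes "3 * k = 2 * CARD('n)"
  shows "card (exps_upto (2 * k) :: ('n::finite \<Rightarrow> nat) set) + card (exps_upto k :: ('n \<Rightarrow> nat) set)
    = 3 ^ CARD('n) + trinomial CARD('n) k"
proof -
  let ?E = "reduced_exps :: ('n \<Rightarrow> nat) set"
  have "2 * CARD('n) - 2 * k = k" using assms by simp
  have "card ?E = card (exps_upto (2 * k) :: ('n \<Rightarrow> nat) set) + card {e \<in> ?E. 2 * k < sum e UNIV}"
    unfolding exps_upto_def by (subst card_Un_disjoint[symmetric]) (auto intro: arg_cong[where f=card])
  also have "card {e \<in> ?E. 2 * k < sum e UNIV} = card {e \<in> ?E. sum e UNIV \<in> {..<k}}"
    using card_reduced_exps_degree_gt[where 'n='n, of "2 * k"] assms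
    by (simp add: \<open>2 * CARD('n) - 2 * k = k\<close>)
  also have "\<dots> = (\<Sum>j<k. trinomial CARD('n) j)"
    by (rule card_reduced_exps_degree_in) simp
  finally show ?thesis
    using card_exps_upto[where 'n='n, of k] by (simp add: card_reduced_exps flip: lessThan_Suc_atMost)
qed

section \<open>Reduced polynomial functions on \<open>\<bbbF>\<^sub>3\<^sup>n\<close>\<close>

lemma F3_cases: "(x :: 3) = 0 \<or> x = 1 \<or> x = 2"
proof -
  have "x = 1 \<or> x = 2 \<or> x = 3" by (rule exhaust_3)
  then show ?thesis by auto
qed

lemma F3_square_nonzero: "(x :: 3) \<noteq> 0 \<Longrightarrow> x * x = 1"
  using F3_cases[of x] by auto

lemma F3_vec_neg_double: "- x + - x = (x :: 3 ^ 'n)"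
proof -
  have "- y + - y = y" for y :: 3 using F3_cases[of y] by auto
  then show ?thesis by (simp add: vec_eq_iff)
qed

definition monomial_fun :: "('n::finite \<Rightarrow> nat) \<Rightarrow> 'a::comm_semiring_1 ^ 'n \<Rightarrow> 'a" where
  "monomial_fun e x = (\<Prod>i\<in>UNIV. x $ i ^ e i)"

definition poly_fun :: "('n::finite \<Rightarrow> nat) set \<Rightarrow> (('n \<Rightarrow> nat) \<Rightarrow> 'a) \<Rightarrow> 'a ^ 'n \<Rightarrow> 'a::comm_semiring_1" where
  "poly_fun S c x = (\<Sum>e\<in>S. c e * monomial_fun e x)"

definition reduced_polys :: "nat \<Rightarrow> (3 ^ 'n::finite \<Rightarrow> 3) set" where
  "reduced_polys d = poly_fun (exps_upto d) ` (exps_upto d \<rightarrow>\<^sub>E UNIV)"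

lemma poly_fun_restrict: "poly_fun S (restrict c S) = poly_fun S c"
  unfolding poly_fun_def by (intro ext sum.cong) auto

lemma poly_fun_in_image: "poly_fun S c \<in> poly_fun S ` (S \<rightarrow>\<^sub>E UNIV)"
  by (rule image_eqI[of _ _ "restrict c S"]) (simp_all add: poly_fun_restrict)

lemma lin_closed_poly_funs:
  fixes S :: "('n::finite \<Rightarrow> nat) set"
  shows "lin_closed (poly_fun S ` (S \<rightarrow>\<^sub>E (UNIV :: 'a::comm_ring_1 set)))"
  unfolding lin_closed_def
proof clarify
  fix c c' :: "('n \<Rightarrow> nat) \<Rightarrow> 'a" and k
  have "(\<lambda>x. poly_fun S c x + k * poly_fun S c' x) = poly_fun S (\<lambda>e. c e + k * c' e)"
    by (simp add: poly_fun_def fun_eq_iff sum.distrib sum_distrib_left distrib_right mult.assoc)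
  then show "(\<lambda>x. poly_fun S c x + k * poly_fun S c' x) \<in> poly_fun S ` (S \<rightarrow>\<^sub>E UNIV)"
    by (simp add: poly_fun_in_image)
qed

lemma indicator_in_poly_funs:
  fixes a :: "3 ^ 'n::finite"
  shows "(\<lambda>x. if x = a then 1 else 0) \<in> poly_fun reduced_exps ` (reduced_exps \<rightarrow>\<^sub>E (UNIV :: 3 set))"
proof -
  define p where "p i j = (if j = 0 then 1 - (a $ i)\<^sup>2 else if j = 1 then 2 * a $ i else - 1 :: 3)"
    for i and j :: nat
  have factor: "1 - (x $ i - a $ i)\<^sup>2 = (\<Sum>j\<le>2. p i j * x $ i ^ j)" for x :: "3 ^ 'n" and i
    by (simp add: p_def numeral_2_eq_2 atMost_Suc algebra_simps power2_eq_square)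
  have "(\<lambda>x. if x = a then 1 else 0) = (\<lambda>x. \<Prod>i\<in>UNIV. 1 - (x $ i - a $ i)\<^sup>2)"
  proof
    fix x :: "3 ^ 'n"
    show "(if x = a then 1 else 0) = (\<Prod>i\<in>UNIV. 1 - (x $ i - a $ i)\<^sup>2)"
    proof (cases "x = a")
      case False
      then obtain i where "x $ i - a $ i \<noteq> 0" by (auto simp: vec_eq_iff)
      then have "1 - (x $ i - a $ i)\<^sup>2 = 0" by (simp add: power2_eq_square F3_square_nonzero)
      then have "(\<Prod>i\<in>UNIV. 1 - (x $ i - a $ i)\<^sup>2) = 0" by (intro prod_zero) auto
      with False show ?thesis by simp
    qed simp
  qed
  also have "\<dots> = (\<lambda>x. \<Sum>g\<in>reduced_exps. \<Prod>i\<in>UNIV. p i (g i) * x $ i ^ g i)"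
    unfolding factor reduced_exps_eq_PiE by (intro ext prod_sum_PiE) auto
  also have "\<dots> = poly_fun reduced_exps (\<lambda>g. \<Prod>i\<in>UNIV. p i (g i))"
    by (simp add: fun_eq_iff poly_fun_def monomial_fun_def prod.distrib)
  finally show ?thesis by (simp only: poly_fun_in_image)
qed

lemma poly_funs_eq_UNIV: "poly_fun reduced_exps ` (reduced_exps \<rightarrow>\<^sub>E UNIV) = (UNIV :: (3 ^ 'n::finite \<Rightarrow> 3) set)"
proof -
  let ?V = "poly_fun reduced_exps ` (reduced_exps \<rightarrow>\<^sub>E UNIV) :: (3 ^ 'n \<Rightarrow> 3) set"
  have "f \<in> ?V" for f
  proof -
    have "(\<Sum>a\<in>UNIV. f a * (if x = a then 1 else 0)) = (\<Sum>a\<in>UNIV. if x = a then f a else 0)" for x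
      by (intro sum.cong) auto
    then have "f = (\<lambda>x. \<Sum>a\<in>UNIV. f a * (if x = a then 1 else 0))" by simp
    also have "\<dots> \<in> ?V"
      by (intro lin_closed_sum lin_closed_poly_funs indicator_in_poly_funs) auto
    finally show ?thesis .
  qed
  then show ?thesis by blast
qed

lemma inj_on_poly_fun:
  assumes "S \<subseteq> reduced_exps"
  shows "inj_on (poly_fun S) (S \<rightarrow>\<^sub>E (UNIV :: 3 set) :: (('n::finite \<Rightarrow> nat) \<Rightarrow> 3) set)"
proof -
  let ?E = "reduced_exps :: ('n \<Rightarrow> nat) set"
  have "card (?E \<rightarrow>\<^sub>E (UNIV :: 3 set)) = 3 ^ 3 ^ CARD('n)"
    by (simp add: card_PiE card_reduced_exps)
  also have "\<dots> = card (UNIV :: (3 ^ 'n \<Rightarrow> 3) set)"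
    by (simp add: card_fun)
  finally have inj: "inj_on (poly_fun ?E) (?E \<rightarrow>\<^sub>E (UNIV :: 3 set))"
    by (intro eq_card_imp_inj_on) (simp_all add: finite_PiE poly_funs_eq_UNIV)
  define pad where "pad c = (\<lambda>e\<in>?E. if e \<in> S then c e else 0)" for c :: "('n \<Rightarrow> nat) \<Rightarrow> 3"
  have pad: "poly_fun ?E (pad c) = poly_fun S c" for c :: "('n \<Rightarrow> nat) \<Rightarrow> 3"
  proof -
    have "poly_fun ?E (pad c) = poly_fun ?E (\<lambda>e. if e \<in> S then c e else 0)"
      by (simp add: pad_def poly_fun_restrict)
    also have "\<dots> = poly_fun S c"
      unfolding poly_fun_def using assms
      by (intro ext) (simp add: if_distrib[of "\<lambda>y. y * _"] sum.If_cases Int_absorb1 Int_absorb2)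
    finally show ?thesis .
  qed
  show ?thesis
  proof (rule inj_onI)
    fix c c' :: "('n \<Rightarrow> nat) \<Rightarrow> 3"
    assume c: "c \<in> S \<rightarrow>\<^sub>E UNIV" and c': "c' \<in> S \<rightarrow>\<^sub>E UNIV" and "poly_fun S c = poly_fun S c'"
    then have "poly_fun ?E (pad c) = poly_fun ?E (pad c')" by (simp add: pad)
    then have "pad c = pad c'" by (rule inj_onD[OF inj]) (simp_all add: pad_def)
    have "c e = c' e" if "e \<in> S" for e
      using fun_cong[OF \<open>pad c = pad c'\<close>, of e] that assms by (auto simp: pad_def)
    then show "c = c'" by (rule PiE_ext[OF c c'])
  qed
qed

lemma card_reduced_polys: "card (reduced_polys d :: (3 ^ 'n::finite \<Rightarrow> 3) set) = 3 ^ card (exps_upto d :: ('n \<Rightarrow> nat) set)"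
proof -
  have "inj_on (poly_fun (exps_upto d)) (exps_upto d \<rightarrow>\<^sub>E (UNIV :: 3 set) :: (('n \<Rightarrow> nat) \<Rightarrow> 3) set)"
    by (rule inj_on_poly_fun) (auto simp: exps_upto_def)
  then show ?thesis by (simp add: reduced_polys_def card_image card_PiE)
qed

lemma lin_closed_reduced_polys: "lin_closed (reduced_polys d)"
  unfolding reduced_polys_def by (rule lin_closed_poly_funs)

lemma monomial_fun_add:
  fixes x y :: "'a::comm_semiring_1 ^ 'n::finite"
  shows "monomial_fun e (x + y) = (\<Sum>g\<in>PiE UNIV (\<lambda>i. {..e i}).
    (\<Prod>i\<in>UNIV. of_nat (e i choose g i)) * monomial_fun g x * monomial_fun (\<lambda>i. e i - g i) y)"
proof -
  have "monomial_fun e (x + y)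
      = (\<Prod>i\<in>UNIV. \<Sum>j\<le>e i. of_nat (e i choose j) * x $ i ^ j * y $ i ^ (e i - j))"
    by (simp add: monomial_fun_def binomial_ring)
  also have "\<dots> = (\<Sum>g\<in>PiE UNIV (\<lambda>i. {..e i}).
      \<Prod>i\<in>UNIV. of_nat (e i choose g i) * x $ i ^ g i * y $ i ^ (e i - g i))"
    by (rule prod_sum_PiE) auto
  finally show ?thesis
    by (simp add: monomial_fun_def prod.distrib)
qed

text \<open>Each monomial of \<open>f(x + y)\<close> has degree at most \<open>k\<close> in \<open>x\<close> or in \<open>y\<close>.\<close>
lemma reduced_poly_add_decomposition:
  fixes f :: "3 ^ 'n::finite \<Rightarrow> 3"
  assumes "f \<in> reduced_polys (2 * k)"
  shows "\<exists>u v. \<forall>x y. f (x + y)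
    = (\<Sum>j\<in>(exps_upto k :: ('n \<Rightarrow> nat) set) <+> (exps_upto k :: ('n \<Rightarrow> nat) set). u j x * v j y)"
proof -
  define E where "E = (exps_upto k :: ('n \<Rightarrow> nat) set)"
  obtain c where f: "f = poly_fun (exps_upto (2 * k)) c"
    using assms by (auto simp: reduced_polys_def)
  define Q where "Q = Sigma (exps_upto (2 * k) :: ('n \<Rightarrow> nat) set) (\<lambda>e. PiE UNIV (\<lambda>i. {..e i :: nat}))"
  define w where "w q = c (fst q) * (\<Prod>i\<in>UNIV. of_nat (fst q i choose snd q i))" for q
  have "finite Q" by (simp add: Q_def finite_PiE)
  have expand: "f (x + y) = (\<Sum>q\<in>Q. w q * monomial_fun (snd q) x * monomial_fun (\<lambda>i. fst q i - snd q i) y)"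
    for x y
    unfolding f poly_fun_def monomial_fun_add Q_def
    by (simp add: sum_distrib_left w_def mult.assoc sum.Sigma split_def finite_PiE)
  have "snd q \<in> E \<or> (\<lambda>i. fst q i - snd q i) \<in> E" if "q \<in> Q" for q
  proof -
    obtain e g where q: "q = (e, g)" and e: "e \<in> exps_upto (2 * k)" and g: "\<And>i. g i \<le> e i"
      using \<open>q \<in> Q\<close> by (auto simp: Q_def)
    have "e i \<le> 2" for i using e by (simp add: exps_upto_def reduced_exps_def)
    then have reduced: "g \<in> reduced_exps" "(\<lambda>i. e i - g i) \<in> reduced_exps"
      using g by (auto simp: reduced_exps_def intro: le_trans order_trans[OF diff_le_self])
    have "sum g UNIV + sum (\<lambda>i. e i - g i) UNIV = sum e UNIV"
      using g by (simp add: sum.distrib[symmetric])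
    with e have "sum g UNIV \<le> k \<or> sum (\<lambda>i. e i - g i) UNIV \<le> k"
      by (auto simp: exps_upto_def)
    with q reduced show ?thesis by (auto simp: E_def exps_upto_def)
  qed
  then show ?thesis
    unfolding expand
    unfolding E_def[symmetric] by (intro sum_regroup_two_slices) (simp_all add: \<open>finite Q\<close> E_def)
qed

section \<open>Cap-free sets\<close>

lemma cap_free_neg_add_delta:
  fixes A :: "(3 ^ 'n::finite) set" and P :: "3 ^ 'n \<Rightarrow> 3"
  assumes cap: "\<forall>a\<in>A. \<forall>b\<in>A. \<forall>c\<in>A. a + b + c = 0 \<longrightarrow> a = b \<and> b = c"
    and support: "\<And>x. P x \<noteq> 0 \<Longrightarrow> x \<in> A" and one: "\<forall>i\<in>I. P i = 1"
    and "a \<in> I" "b \<in> I"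
  shows "P (- a + - b) = (if a = b then 1 else 0)"
proof (cases "a = b")
  case True
  then have "P (- a + - b) = P b" by (simp only: F3_vec_neg_double)
  then show ?thesis using one \<open>b \<in> I\<close> True by simp
next
  case False
  have "P (- a + - b) = 0"
  proof (rule ccontr)
    assume "P (- a + - b) \<noteq> 0"
    moreover have "a + b + (- a + - b) = 0" by simp
    ultimately have "a = b" using cap support one \<open>a \<in> I\<close> \<open>b \<in> I\<close> by (metis one_neq_zero)
    with False show False ..
  qed
  with False show ?thesis by simp
qed

lemma cap_free_card_bound:
  fixes A :: "(3 ^ 'n::finite) set"
  assumes cap: "\<forall>a\<in>A. \<forall>b\<in>A. \<forall>c\<in>A. a + b + c = 0 \<longrightarrow> a = b \<and> b = c"
  shows "card (exps_upto (2 * k) :: ('n \<Rightarrow> nat) set) + card A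
    \<le> 3 ^ CARD('n) + 2 * card (exps_upto k :: ('n \<Rightarrow> nat) set)"
proof -
  let ?E = "exps_upto k :: ('n \<Rightarrow> nat) set"
  define V where "V = {f \<in> reduced_polys (2 * k). \<forall>x\<in>- A. f x = 0}"
  have "lin_closed V"
    unfolding V_def by (intro lin_closed_vanishing lin_closed_reduced_polys)
  have dim: "3 ^ card (exps_upto (2 * k) :: ('n \<Rightarrow> nat) set) \<le> 3 ^ card (- A) * card V"
    using card_le_card_restrict_mult_card_vanishing[OF lin_closed_reduced_polys, of "2 * k" "- A"]
    by (simp add: card_reduced_polys V_def)
  then have "V \<noteq> {}" by auto
  moreover have "\<exists>w. w * z = 1" if "z \<noteq> 0" for z :: 3
    using F3_square_nonzero[OF that] by blast
  ultimately obtain P I where "P \<in> V" and P_one: "\<forall>i\<in>I. P i = 1" and "card V \<le> 3 ^ card I"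
    using ex_fun_eq_one_on_large_set[OF \<open>lin_closed V\<close>] by auto
  then have P_support: "x \<in> A" if "P x \<noteq> 0" for x
    using that by (auto simp: V_def)
  obtain u v where uv: "\<forall>x y. P (x + y) = (\<Sum>j\<in>?E <+> ?E. u j x * v j y)"
    using reduced_poly_add_decomposition \<open>P \<in> V\<close> unfolding V_def by blast
  have "card I \<le> card (?E <+> ?E)"
  proof (rule card_le_tensor_rank[where M = "\<lambda>a b. P (- a + - b)"])
    show "finite I" "finite (?E <+> ?E)" by simp_all
    show "P (- a + - b) = (if a = b then 1 else 0)" if "a \<in> I" "b \<in> I" for a b
      using cap_free_neg_add_delta[OF cap] P_support P_one that by blast
    show "P (- a + - b) = (\<Sum>j\<in>?E <+> ?E. u j (- a) * v j (- b))" for a b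
      by (rule uv[rule_format])
  qed
  then have "card I \<le> 2 * card ?E" by (simp add: card_Plus)
  have "(3::nat) ^ card (exps_upto (2 * k) :: ('n \<Rightarrow> nat) set) \<le> 3 ^ card (- A) * card V"
    by (fact dim)
  also have "\<dots> \<le> 3 ^ card (- A) * 3 ^ (2 * card ?E)"
  proof (rule mult_le_mono2)
    have "(3::nat) ^ card I \<le> 3 ^ (2 * card ?E)"
      using \<open>card I \<le> 2 * card ?E\<close> by (rule power_increasing) simp
    with \<open>card V \<le> 3 ^ card I\<close> show "card V \<le> 3 ^ (2 * card ?E)" by (rule order_trans)
  qed
  also have "\<dots> = 3 ^ (card (- A) + 2 * card ?E)"
    by (simp only: power_add)
  finally have "card (exps_upto (2 * k) :: ('n \<Rightarrow> nat) set) \<le> card (- A) + 2 * card ?E"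
    by simp
  moreover have "card (- A) + card A = 3 ^ CARD('n)"
    using card_Un_disjoint[of "- A" A] by (simp add: Compl_partition2)
  ultimately show ?thesis by linarith
qed

theorem mainTheorem6:
  fixes A :: "(3 ^ 'n) set"
  assumes "CARD('n) \<ge> 3" and "3 dvd CARD('n)"
    and "\<forall>a\<in>A. \<forall>b\<in>A. \<forall>c\<in>A. a + b + c = 0 \<longrightarrow> a = b \<and> b = c"
  shows "int (card A) \<le> 3 * (\<Sum>i = 0..2 * CARD('n) div 3. int (trinomial CARD('n) i))
                          - int (trinomial CARD('n) (2 * CARD('n) div 3))"
proof -
  define k where "k = 2 * CARD('n) div 3"
  have "3 * k = 2 * CARD('n)" using assms(2) by (auto simp: k_def elim!: dvdE)
  have "card (exps_upto (2 * k) :: ('n \<Rightarrow> nat) set) + card A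
      \<le> 3 ^ CARD('n) + 2 * card (exps_upto k :: ('n \<Rightarrow> nat) set)"
    using assms(3) by (rule cap_free_card_bound)
  moreover have "card (exps_upto (2 * k) :: ('n \<Rightarrow> nat) set) + card (exps_upto k :: ('n \<Rightarrow> nat) set)
      = 3 ^ CARD('n) + trinomial CARD('n) k"
    using \<open>3 * k = 2 * CARD('n)\<close> by (rule card_exps_upto_double_plus)
  ultimately have "int (card A) + int (trinomial CARD('n) k) \<le> 3 * int (card (exps_upto k :: ('n \<Rightarrow> nat) set))"
    by linarith
  moreover have "int (card (exps_upto k :: ('n \<Rightarrow> nat) set)) = (\<Sum>i = 0..k. int (trinomial CARD('n) i))"
    by (simp add: card_exps_upto atLeast0AtMost)
  ultimately show ?thesis
    unfolding k_def[symmetric] by linarith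
qed

end
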